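(* Consider the two-slab, three-element (periodic) space-time SBP scheme: unknowns $\boldsymbol\rho^{I},\boldsymbol g^{I}_k,\boldsymbol\rho^{II},\boldsymbol g^{II}_k$ ($k=1,\dots,n_v$) satisfying, for slab I, $$\mathsf D_t\boldsymbol\rho^{I}+\tilde{\mathsf D}_x\langle v\boldsymbol g^{I}\rangle=-\sigma_a\boldsymbol\rho^{I}-\mathsf H_t^{-1}\mathsf t_B\mathsf t_B^\top(\boldsymbol\rho^{I}-\boldsymbol\rho^{I}(0)),$$ $$\mathsf D_t\boldsymbol g^{I}_k+\tfrac{v_k}{\varepsilon}\tilde{\mathsf D}_x\boldsymbol g^{I}_k-\tfrac1\varepsilon\langle v\tilde{\mathsf D}_x\boldsymbol g^{I}\rangle+\tfrac{v_k}{\varepsilon^2}\tilde{\mathsf D}_x\boldsymbol\rho^{I}=-\Big(\tfrac{\sigma_s}{\varepsilon^2}+\sigma_a\Big)\boldsymbol g^{I}_k-\mathsf H_t^{-1}\mathsf t_B\mathsf t_B^\top(\boldsymbol g^{I}_k-\boldsymbol g^{I}_k(0)),$$ and for slab II the same equations with superscript $II$ and with the initial SAT terms replaced by $-\mathsf H_t^{-1}\mathsf t_B(\mathsf t_B^\top\boldsymbol\rho^{II}-\mathsf t_T^\top\boldsymbol\rho^{I})$ and $-\mathsf H_t^{-1}\mathsf t_B(\mathsf t_B^\top\boldsymbol g^{II}_k-\mathsf t_T^\top\boldsymbol g^{I}_k)$ respectively; the initial data satisfy $\langle\boldsymbol g^{I}(0)\rangle=0$. Then every solution satisfies $\langle\boldsymbol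 g^{I}\rangle=0$ and $\langle\boldsymbol g^{II}\rangle=0$.
   Context: SBP operators: $\bar{\mathsf D}=\bar{\mathsf H}^{-1}\bar{\mathsf Q}$ on nodes $x_0<\dots<x_n$ is a degree-$p$ SBP approximation of $d/dx$ if $\bar{\mathsf D}\boldsymbol x^k=k\boldsymbol x^{k-1}$ for $0\le k\le p$, $\bar{\mathsf H}$ is diagonal symmetric positive definite, and $\bar{\mathsf Q}+\bar{\mathsf Q}^\top=\bar{\mathsf E}=\bar{\boldsymbol t}_R\bar{\boldsymbol t}_R^\top-\bar{\boldsymbol t}_L\bar{\boldsymbol t}_L^\top=\mathrm{diag}(-1,0,\dots,0,1)$, $\bar{\boldsymbol t}_L,\bar{\boldsymbol t}_R$ first/last unit vectors. $\bar{\mathsf D}_x=\bar{\mathsf H}_x^{-1}\bar{\mathsf Q}_x$ on $n_x+1$ spatial nodes per element, $\bar{\mathsf S}_x=\bar{\mathsf Q}_x-\frac12\bar{\mathsf E}_x$; $\bar{\mathsf D}_t=\bar{\mathsf H}_t^{-1}\bar{\mathsf Q}_t$ on $n_t+1$ temporal nodes per slab, with first/last unit vectors $\bar{\boldsymbol t}_B,\bar{\boldsymbol t}_T$. $\tilde{\bar{\mathsf D}}^G_x=(\mathsf I_3\otimes\bar{\mathsf H}_x^{-1})\tilde{\bar{\mathsf Q}}^G_x$, with $\tilde{\bar{\mathsf Q}}^G_x$ the $3\times3$ block matrix having diagonal blocks $\bar{\mathsf S}_x$, blocks $(1,2),(2,3),(3,1)$ equal to $\frac12\bar{\boldsymbol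 t}_R\bar{\boldsymbol t}_L^\top$, blocks $(2,1),(3,2),(1,3)$ equal to $-\frac12\bar{\boldsymbol t}_L\bar{\boldsymbol t}_R^\top$. With identities $\mathsf I_{n_x},\mathsf I_{n_t}$ of sizes $n_x+1,n_t+1$: $\tilde{\mathsf D}_x=\mathsf I_{n_t}\otimes\tilde{\bar{\mathsf D}}^G_x$, $\mathsf D_t=\bar{\mathsf D}_t\otimes\mathsf I_3\otimes\mathsf I_{n_x}$, $\mathsf H_t=\bar{\mathsf H}_t\otimes\mathsf I_3\otimes\mathsf I_{n_x}$, $\mathsf t_B=\bar{\boldsymbol t}_B\otimes\mathsf I_3\otimes\mathsf I_{n_x}$, $\mathsf t_T=\bar{\boldsymbol t}_T\otimes\mathsf I_3\otimes\mathsf I_{n_x}$. Velocity nodes $v_k$, weights $\omega_k$ with $\sum\omega_k=1$, $\sum\omega_kv_k=0$; $\langle\boldsymbol a\rangle=\sum_k\omega_k\boldsymbol a_k$. $\varepsilon>0$, $\sigma_s>0$, $\sigma_a\ge0$; $\boldsymbol\rho^{I}(0),\boldsymbol g^{I}_k(0)$ given initial-data vectors. *)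

theory Defs
  imports Main "HOL.Real"
begin

text \<open>1D matrices on nodes 0..n are functions nat => nat => real; diagonal
 norm matrices are given by their diagonal entries.  Space-time vectors of the
 scheme are functions  u i e j  with time node i (0..n_t), element e (0..2) and
 spatial node j (0..n_x); this is the index ordering of the Kronecker products
 Dbar_t (x) I_3 (x) I_nx.\<close>

definition Ebar :: "nat \<Rightarrow> nat \<Rightarrow> nat \<Rightarrow> real" where
  "Ebar n i j = (if i = j \<and> i = 0 then -1 else if i = j \<and> i = n then 1 else 0)"

definition is_SBP ::
  "nat \<Rightarrow> nat \<Rightarrow> (nat \<Rightarrow> real) \<Rightarrow> (nat \<Rightarrow> real) \<Rightarrow> (nat \<Rightarrow> nat \<Rightarrow> real)
     \<Rightarrow> (nat \<Rightarrow> nat \<Rightarrow> real) \<Rightarrow> bool" where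
  "is_SBP p n x h Q D \<longleftrightarrow>
     1 \<le> n \<and>
     (\<forall>i<n. x i < x (Suc i)) \<and>
     (\<forall>i\<le>n. 0 < h i) \<and>
     (\<forall>i\<le>n. \<forall>j\<le>n. D i j = Q i j / h i) \<and>
     (\<forall>i\<le>n. \<forall>j\<le>n. Q i j + Q j i = Ebar n i j) \<and>
     (\<forall>k\<le>p. \<forall>i\<le>n. (\<Sum>j\<le>n. D i j * x j ^ k) = real k * x i ^ (k - 1))"

text \<open>Global 3-element periodic coupling matrix tilde Qbar^G_x, entry
 (block e, row j ; block e', column j'), elements numbered 0,1,2.\<close>
definition QG :: "nat \<Rightarrow> (nat \<Rightarrow> nat \<Rightarrow> real) \<Rightarrow> nat \<Rightarrow> nat \<Rightarrow> nat \<Rightarrow> nat \<Rightarrow> real" where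
  "QG nx Qx e j e' j' =
     (if e' = e then Qx j j' - Ebar nx j j' / 2
      else if e' = (e + 1) mod 3 then (if j = nx \<and> j' = 0 then 1/2 else 0)
      else (if j = 0 \<and> j' = nx then -1/2 else 0))"

text \<open>tilde D_x = I_nt (x) tilde Dbar^G_x with tilde Dbar^G_x = (I_3 (x) Hbar_x^{-1}) tilde Qbar^G_x.\<close>
definition Dx_op :: "nat \<Rightarrow> (nat \<Rightarrow> real) \<Rightarrow> (nat \<Rightarrow> nat \<Rightarrow> real)
    \<Rightarrow> (nat \<Rightarrow> nat \<Rightarrow> nat \<Rightarrow> real) \<Rightarrow> nat \<Rightarrow> nat \<Rightarrow> nat \<Rightarrow> real" where
  "Dx_op nx hx Qx u = (\<lambda>i e j. (1 / hx j) * (\<Sum>e'<3. \<Sum>j'\<le>nx. QG nx Qx e j e' j' * u i e' j'))"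

text \<open>D_t = Dbar_t (x) I_3 (x) I_nx.\<close>
definition Dt_op :: "nat \<Rightarrow> (nat \<Rightarrow> nat \<Rightarrow> real)
    \<Rightarrow> (nat \<Rightarrow> nat \<Rightarrow> nat \<Rightarrow> real) \<Rightarrow> nat \<Rightarrow> nat \<Rightarrow> nat \<Rightarrow> real" where
  "Dt_op nt Dt u = (\<lambda>i e j. \<Sum>i'\<le>nt. Dt i i' * u i' e j)"

definition vavg :: "nat \<Rightarrow> (nat \<Rightarrow> real) \<Rightarrow> (nat \<Rightarrow> nat \<Rightarrow> nat \<Rightarrow> nat \<Rightarrow> real)
    \<Rightarrow> nat \<Rightarrow> nat \<Rightarrow> nat \<Rightarrow> real" where
  "vavg nv \<omega> a = (\<lambda>i e j. \<Sum>k=1..nv. \<omega> k * a k i e j)"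

end

theory Submission
  imports Defs
begin

(* Averaging the kinetic equations with the weights \<omega> removes every spatial term:
   the two streaming terms cancel because \<langle>1\<rangle> = 1, and the density coupling
   vanishes because \<langle>v\<rangle> = 0.  Hence, at every spatial node, \<langle>g\<rangle> solves the
   damped SBP-SAT problem D_t G = -(\<sigma>_s/\<epsilon>^2 + \<sigma>_a) G - H_t^-1 t_B (G_0 - data)
   in time, where the data is \<langle>g^I(0)\<rangle> = 0 for slab I and the final value of \<langle>g^I\<rangle>
   for slab II.  With zero data the SBP energy identity
   G^T H_t D_t G = (G_n^2 - G_0^2)/2 forces G = 0. *)

lemma Ebar_quadratic_form:
  assumes "1 \<le> n"
  shows "(\<Sum>i\<le>n. \<Sum>j\<le>n. G i * Ebar n i j * G j) = (G n)\<^sup>2 - (G 0)\<^sup>2"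
proof -
  have diag: "Ebar n i j = (if j = i then Ebar n i i else 0)" for i j
    by (simp add: Ebar_def)
  have "(\<Sum>j\<le>n. G i * Ebar n i j * G j) = Ebar n i i * (G i)\<^sup>2" if "i \<le> n" for i
  proof -
    have "(\<Sum>j\<le>n. G i * Ebar n i j * G j) = (\<Sum>j\<le>n. if j = i then Ebar n i i * (G i)\<^sup>2 else 0)"
      by (intro sum.cong refl, subst diag) (simp add: power2_eq_square)
    then show ?thesis
      using that by simp
  qed
  then have "(\<Sum>i\<le>n. \<Sum>j\<le>n. G i * Ebar n i j * G j) = (\<Sum>i\<le>n. Ebar n i i * (G i)\<^sup>2)"
    by simp
  also have "\<dots> = (\<Sum>i\<le>n. (if i = n then (G n)\<^sup>2 else 0) - (if i = 0 then (G 0)\<^sup>2 else 0))"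
    using assms by (intro sum.cong) (auto simp: Ebar_def)
  finally show ?thesis
    by (simp add: sum_subtractf)
qed

lemma SBP_quadratic_form:
  assumes "1 \<le> n" and QE: "\<forall>i\<le>n. \<forall>j\<le>n. Q i j + Q j i = Ebar n i j"
  shows "2 * (\<Sum>i\<le>n. \<Sum>j\<le>n. G i * Q i j * G j) = (G n)\<^sup>2 - (G 0)\<^sup>2"
proof -
  have "(\<Sum>i\<le>n. \<Sum>j\<le>n. G i * Q i j * G j) = (\<Sum>i\<le>n. \<Sum>j\<le>n. G i * Q j i * G j)"
    by (subst sum.swap) (simp add: mult_ac)
  then have "2 * (\<Sum>i\<le>n. \<Sum>j\<le>n. G i * Q i j * G j)
      = (\<Sum>i\<le>n. \<Sum>j\<le>n. G i * (Q i j + Q j i) * G j)"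
    by (simp add: algebra_simps sum.distrib)
  also have "\<dots> = (\<Sum>i\<le>n. \<Sum>j\<le>n. G i * Ebar n i j * G j)"
    using QE by simp
  finally show ?thesis
    using Ebar_quadratic_form[OF \<open>1 \<le> n\<close>] by simp
qed

lemma SBP_SAT_damped_homogeneous_zero:
  assumes SBP: "is_SBP p n x h Q D" and c: "c > 0"
    and eq: "\<forall>i\<le>n. (\<Sum>j\<le>n. D i j * G j) = - c * G i - (if i = 0 then G 0 / h 0 else 0)"
  shows "\<forall>i\<le>n. G i = 0"
proof -
  from SBP have n: "1 \<le> n" and h: "\<forall>i\<le>n. 0 < h i"
    and D: "\<forall>i\<le>n. \<forall>j\<le>n. D i j = Q i j / h i"
    and QE: "\<forall>i\<le>n. \<forall>j\<le>n. Q i j + Q j i = Ebar n i j"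
    unfolding is_SBP_def by auto
  define T where "T = (\<Sum>i\<le>n. h i * (G i)\<^sup>2)"
  have row: "(\<Sum>j\<le>n. G i * Q i j * G j) = - c * (h i * (G i)\<^sup>2) - (if i = 0 then (G 0)\<^sup>2 else 0)"
    if "i \<le> n" for i
  proof -
    have "(\<Sum>j\<le>n. G i * Q i j * G j) = G i * h i * (\<Sum>j\<le>n. D i j * G j)"
      using D h that by (auto simp: sum_distrib_left intro!: sum.cong)
    also have "\<dots> = G i * h i * (- c * G i - (if i = 0 then G 0 / h 0 else 0))"
      using eq that by simp
    also have "\<dots> = - c * (h i * (G i)\<^sup>2) - (if i = 0 then (G 0)\<^sup>2 else 0)"
      using h that by (auto simp: power2_eq_square field_simps)
    finally show ?thesis .
  qed
  have "(\<Sum>i\<le>n. \<Sum>j\<le>n. G i * Q i j * G j) = - c * T - (G 0)\<^sup>2"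
    by (simp add: row T_def sum_subtractf sum_distrib_left)
  then have "2 * (c * T) = - (G n)\<^sup>2 - (G 0)\<^sup>2"
    using SBP_quadratic_form[OF n QE, of G] by simp
  then have "c * T \<le> 0"
    using zero_le_power2[of "G n"] zero_le_power2[of "G 0"] by linarith
  moreover have terms_nonneg: "\<forall>i\<in>{..n}. 0 \<le> h i * (G i)\<^sup>2"
    using h by (simp add: less_imp_le)
  then have "0 \<le> T"
    unfolding T_def by (intro sum_nonneg) auto
  ultimately have "T = 0"
    using c by (simp add: mult_le_0_iff)
  then have "\<forall>i\<in>{..n}. h i * (G i)\<^sup>2 = 0"
    unfolding T_def using terms_nonneg by (subst sum_nonneg_eq_0_iff[symmetric]) auto
  then show ?thesis
    using h by (metis atMost_iff mult_eq_0_iff order_less_irrefl power_eq_0_iff)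
qed

lemma weighted_average_transport_cancels:
  fixes A B X v \<omega> :: "nat \<Rightarrow> real"
  assumes eq: "\<forall>k\<in>{1..nv}. A k + v k / \<epsilon> * X k - 1 / \<epsilon> * (\<Sum>l=1..nv. \<omega> l * (v l * X l))
                 + v k / \<epsilon>\<^sup>2 * Z = B k"
    and w1: "(\<Sum>k=1..nv. \<omega> k) = 1" and w2: "(\<Sum>k=1..nv. \<omega> k * v k) = 0"
  shows "(\<Sum>k=1..nv. \<omega> k * A k) = (\<Sum>k=1..nv. \<omega> k * B k)"
proof -
  define Y where "Y = (\<Sum>l=1..nv. \<omega> l * (v l * X l))"
  have "(\<Sum>k=1..nv. \<omega> k * B k)
      = (\<Sum>k=1..nv. \<omega> k * A k + \<omega> k * (v k * X k) / \<epsilon> - \<omega> k * Y / \<epsilon> + \<omega> k * v k * Z / \<epsilon>\<^sup>2)"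
  proof (rule sum.cong[OF refl])
    fix k assume "k \<in> {1..nv}"
    then have Bk: "B k = A k + v k / \<epsilon> * X k - 1 / \<epsilon> * Y + v k / \<epsilon>\<^sup>2 * Z"
      using eq unfolding Y_def by simp
    show "\<omega> k * B k
        = \<omega> k * A k + \<omega> k * (v k * X k) / \<epsilon> - \<omega> k * Y / \<epsilon> + \<omega> k * v k * Z / \<epsilon>\<^sup>2"
      unfolding Bk by (simp add: algebra_simps)
  qed
  also have "\<dots> = (\<Sum>k=1..nv. \<omega> k * A k) + Y / \<epsilon> - (\<Sum>k=1..nv. \<omega> k) * Y / \<epsilon>
      + (\<Sum>k=1..nv. \<omega> k * v k) * Z / \<epsilon>\<^sup>2"
    by (simp add: Y_def sum.distrib sum_subtractf sum_distrib_right sum_divide_distrib)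
  finally show ?thesis
    using w1 w2 by simp
qed

lemma Dt_op_vavg: "Dt_op nt Dt (vavg nv \<omega> g) = vavg nv \<omega> (\<lambda>k. Dt_op nt Dt (g k))"
  unfolding Dt_op_def vavg_def sum_distrib_left
  by (intro ext, subst sum.swap) (simp add: mult.left_commute)

lemma averaged_kinetic_equation:
  fixes Dx :: "(nat \<Rightarrow> nat \<Rightarrow> nat \<Rightarrow> real) \<Rightarrow> nat \<Rightarrow> nat \<Rightarrow> nat \<Rightarrow> real"
  assumes eq: "\<forall>k\<in>{1..nv}. \<forall>i\<le>nt. \<forall>e<3. \<forall>j\<le>nx.
       Dt_op nt Dt (g k) i e j + v k / \<epsilon> * Dx (g k) i e j
       - 1 / \<epsilon> * vavg nv \<omega> (\<lambda>l. (\<lambda>i e j. v l * Dx (g l) i e j)) i e j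
       + v k / \<epsilon>\<^sup>2 * Dx \<rho> i e j
       = - c * g k i e j - (if i = 0 then (g k 0 e j - g0 k e j) / ht 0 else 0)"
    and w1: "(\<Sum>k=1..nv. \<omega> k) = 1" and w2: "(\<Sum>k=1..nv. \<omega> k * v k) = 0"
  shows "\<forall>i\<le>nt. \<forall>e<3. \<forall>j\<le>nx. Dt_op nt Dt (vavg nv \<omega> g) i e j
       = - c * vavg nv \<omega> g i e j
         - (if i = 0 then (vavg nv \<omega> g 0 e j - (\<Sum>k=1..nv. \<omega> k * g0 k e j)) / ht 0 else 0)"
proof (intro allI impI)
  fix i e j :: nat assume "i \<le> nt" "e < 3" "j \<le> nx"
  then have kinetic: "\<forall>k\<in>{1..nv}. Dt_op nt Dt (g k) i e j + v k / \<epsilon> * Dx (g k) i e j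
      - 1 / \<epsilon> * (\<Sum>l=1..nv. \<omega> l * (v l * Dx (g l) i e j)) + v k / \<epsilon>\<^sup>2 * Dx \<rho> i e j
      = - c * g k i e j - (if i = 0 then (g k 0 e j - g0 k e j) / ht 0 else 0)"
    using eq unfolding vavg_def by blast
  have "Dt_op nt Dt (vavg nv \<omega> g) i e j = (\<Sum>k=1..nv. \<omega> k * Dt_op nt Dt (g k) i e j)"
    unfolding Dt_op_vavg by (simp add: vavg_def)
  also have "\<dots> = (\<Sum>k=1..nv. \<omega> k * (- c * g k i e j - (if i = 0 then (g k 0 e j - g0 k e j) / ht 0 else 0)))"
    using weighted_average_transport_cancels[OF kinetic w1 w2] .
  also have "\<dots> = - c * vavg nv \<omega> g i e j
      - (if i = 0 then (vavg nv \<omega> g 0 e j - (\<Sum>k=1..nv. \<omega> k * g0 k e j)) / ht 0 else 0)"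
    by (cases "i = 0") (simp_all add: vavg_def sum_subtractf sum_distrib_left sum_divide_distrib
        diff_divide_distrib right_diff_distrib mult.left_commute)
  finally show "Dt_op nt Dt (vavg nv \<omega> g) i e j
      = - c * vavg nv \<omega> g i e j
        - (if i = 0 then (vavg nv \<omega> g 0 e j - (\<Sum>k=1..nv. \<omega> k * g0 k e j)) / ht 0 else 0)" .
qed

lemma Dt_op_SAT_homogeneous_zero:
  assumes SBP: "is_SBP p nt ts ht Qt Dt" and c: "c > 0"
    and eq: "\<forall>i\<le>nt. \<forall>e<3. \<forall>j\<le>nx. Dt_op nt Dt u i e j
       = - c * u i e j - (if i = 0 then (u 0 e j - F e j) / ht 0 else 0)"
    and data: "\<forall>e<3. \<forall>j\<le>nx. F e j = 0"
  shows "\<forall>i\<le>nt. \<forall>e<3. \<forall>j\<le>nx. u i e j = 0"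
proof (intro allI impI)
  fix i e j :: nat assume "i \<le> nt" "e < 3" "j \<le> nx"
  have "\<forall>i\<le>nt. (\<Sum>i'\<le>nt. Dt i i' * u i' e j) = - c * u i e j - (if i = 0 then u 0 e j / ht 0 else 0)"
    using eq data \<open>e < 3\<close> \<open>j \<le> nx\<close> by (simp add: Dt_op_def)
  from SBP_SAT_damped_homogeneous_zero[OF SBP c this] \<open>i \<le> nt\<close> show "u i e j = 0"
    by blast
qed

theorem theorem3p10:
  fixes px pt nx nt nv :: nat
    and xs ts hx ht :: "nat \<Rightarrow> real"
    and Qx Dx Qt Dt :: "nat \<Rightarrow> nat \<Rightarrow> real"
    and v \<omega> :: "nat \<Rightarrow> real"
    and \<epsilon> \<sigma>s \<sigma>a :: real
    and \<rho>I \<rho>II :: "nat \<Rightarrow> nat \<Rightarrow> nat \<Rightarrow> real"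
    and gI gII :: "nat \<Rightarrow> nat \<Rightarrow> nat \<Rightarrow> nat \<Rightarrow> real"
    and \<rho>I0 :: "nat \<Rightarrow> nat \<Rightarrow> real"
    and gI0 :: "nat \<Rightarrow> nat \<Rightarrow> nat \<Rightarrow> real"
  assumes SBPx: "is_SBP px nx xs hx Qx Dx"
    and SBPt: "is_SBP pt nt ts ht Qt Dt"
    and w1: "(\<Sum>k=1..nv. \<omega> k) = 1"
    and w2: "(\<Sum>k=1..nv. \<omega> k * v k) = 0"
    and eps: "\<epsilon> > 0" and sigs: "\<sigma>s > 0" and siga: "\<sigma>a \<ge> 0"
    and init0: "\<forall>e<3. \<forall>j\<le>nx. (\<Sum>k=1..nv. \<omega> k * gI0 k e j) = 0"
    and eqrhoI: "\<forall>i\<le>nt. \<forall>e<3. \<forall>j\<le>nx.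
       Dt_op nt Dt \<rho>I i e j + Dx_op nx hx Qx (vavg nv \<omega> (\<lambda>k. (\<lambda>i e j. v k * gI k i e j))) i e j
       = - \<sigma>a * \<rho>I i e j - (if i = 0 then (\<rho>I 0 e j - \<rho>I0 e j) / ht 0 else 0)"
    and eqgI: "\<forall>k\<in>{1..nv}. \<forall>i\<le>nt. \<forall>e<3. \<forall>j\<le>nx.
       Dt_op nt Dt (gI k) i e j + v k / \<epsilon> * Dx_op nx hx Qx (gI k) i e j
       - 1 / \<epsilon> * vavg nv \<omega> (\<lambda>l. (\<lambda>i e j. v l * Dx_op nx hx Qx (gI l) i e j)) i e j
       + v k / \<epsilon>\<^sup>2 * Dx_op nx hx Qx \<rho>I i e j
       = - (\<sigma>s / \<epsilon>\<^sup>2 + \<sigma>a) * gI k i e j - (if i = 0 then (gI k 0 e j - gI0 k e j) / ht 0 else 0)"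
    and eqrhoII: "\<forall>i\<le>nt. \<forall>e<3. \<forall>j\<le>nx.
       Dt_op nt Dt \<rho>II i e j + Dx_op nx hx Qx (vavg nv \<omega> (\<lambda>k. (\<lambda>i e j. v k * gII k i e j))) i e j
       = - \<sigma>a * \<rho>II i e j - (if i = 0 then (\<rho>II 0 e j - \<rho>I nt e j) / ht 0 else 0)"
    and eqgII: "\<forall>k\<in>{1..nv}. \<forall>i\<le>nt. \<forall>e<3. \<forall>j\<le>nx.
       Dt_op nt Dt (gII k) i e j + v k / \<epsilon> * Dx_op nx hx Qx (gII k) i e j
       - 1 / \<epsilon> * vavg nv \<omega> (\<lambda>l. (\<lambda>i e j. v l * Dx_op nx hx Qx (gII l) i e j)) i e j
       + v k / \<epsilon>\<^sup>2 * Dx_op nx hx Qx \<rho>II i e j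
       = - (\<sigma>s / \<epsilon>\<^sup>2 + \<sigma>a) * gII k i e j - (if i = 0 then (gII k 0 e j - gI k nt e j) / ht 0 else 0)"
  shows "(\<forall>i\<le>nt. \<forall>e<3. \<forall>j\<le>nx. vavg nv \<omega> gI i e j = 0)
       \<and> (\<forall>i\<le>nt. \<forall>e<3. \<forall>j\<le>nx. vavg nv \<omega> gII i e j = 0)"
proof -
  have c: "\<sigma>s / \<epsilon>\<^sup>2 + \<sigma>a > 0"
    using eps sigs siga by (simp add: add_pos_nonneg)
  note avg_I = averaged_kinetic_equation[where Dx = "Dx_op nx hx Qx" and ht = ht, OF eqgI w1 w2]
  note avg_II = averaged_kinetic_equation[where Dx = "Dx_op nx hx Qx" and ht = ht, OF eqgII w1 w2]
  have I: "\<forall>i\<le>nt. \<forall>e<3. \<forall>j\<le>nx. vavg nv \<omega> gI i e j = 0"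
    using Dt_op_SAT_homogeneous_zero[OF SBPt c avg_I init0] .
  then have "\<forall>e<3. \<forall>j\<le>nx. (\<Sum>k=1..nv. \<omega> k * gI k nt e j) = 0"
    by (simp add: vavg_def)
  with I show ?thesis
    using Dt_op_SAT_homogeneous_zero[OF SBPt c avg_II] by blast
qed

end
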